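(* Let $a>-1$ and let $T=\begin{bmatrix} t_{11} & t_{12}\\ 0 & t_{22}\end{bmatrix}$, where $t_{12}$ is a random octonion whose eight real coefficients are independent standard Gaussians, and $t_{11}=s_1^{1/2}$, $t_{22}=s_2^{1/2}$ with $s_1,s_2$ having Gamma distributions $\Gamma[a+1,2]$ and $\Gamma[a+5,2]$ respectively, $t_{12},s_1,s_2$ independent. Let $$W=T^\dagger T=\begin{bmatrix} t_{11}^2 & t_{11}t_{12}\\ t_{11}\bar t_{12} & |t_{12}|^2+t_{22}^2\end{bmatrix},$$ and define the eigenvalues $\lambda_1,\lambda_2$ of $W$ as the two roots of $(W_{11}-\lambda)(W_{22}-\lambda)-|W_{12}|^2=0$ (equivalently, the two distinct eightfold degenerate eigenvalues of the $16\times16$ real symmetric matrix $\begin{bmatrix} W_{11}\mathbb I_8 & \omega(W_{12})\\ \omega(W_{12})^T & W_{22}\mathbb I_8\end{bmatrix}$). Then the joint probability density function of $\lambda_1,\lambda_2$ is proportional to $$(\lambda_1\lambda_2)^{a}e^{-(\lambda_1+\lambda_2)/2}(\lambda_2-\lambda_1)^8,\qquad \lambda_1,\lambda_2>0.$$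
   Context: The real octonions form the 8-dimensional real algebra with basis $1,e_1,\dots,e_7$, obtained by Cayley–Dickson doubling of the quaternions: elements are $p_1+p_2 l$ with $p_1,p_2$ quaternions, $e_1=i,e_2=j,e_3=k,e_4=l,e_5=il,e_6=jl,e_7=kl$, with multiplication $(p_1+p_2l)(q_1+q_2l)=(p_1q_1-\bar q_2p_2)+(q_2p_1+p_2\bar q_1)l$. For $x=x_0+\sum_j x_je_j$, $\bar x=x_0-\sum_j x_je_j$ and $|x|^2=x\bar x=x_0^2+\cdots+x_7^2$. $\omega(b)$ denotes the $8\times8$ real matrix of left multiplication $x\mapsto bx$ in the basis $1,e_1,\dots,e_7$. $\Gamma[\kappa,s]$ denotes the Gamma distribution with shape $\kappa$ and scale $s$, i.e. density proportional to $x^{\kappa-1}e^{-x/s}$ on $x>0$. *)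

theory Defs
  imports "HOL-Probability.Probability"
begin

definition gamma_density :: "real \<Rightarrow> real \<Rightarrow> real \<Rightarrow> real" where
  "gamma_density k s x =
     (if 0 < x then x powr (k - 1) * exp (- x / s) / (Gamma k * s powr k) else 0)"

text \<open>An octonion is represented by its 8 real coefficients w.r.t. the basis
  1, e1, ..., e7, i.e. by the coordinates x 0, ..., x 7 of a function nat => real.\<close>
type_synonym octo = "nat \<Rightarrow> real"

definition oct_normsq :: "octo \<Rightarrow> real" where
  "oct_normsq x = (\<Sum>i<8. (x i)\<^sup>2)"

definition oct_scale :: "real \<Rightarrow> octo \<Rightarrow> octo" where
  "oct_scale r x = (\<lambda>i. if i < 8 then r * x i else 0)"

definition eig_lo :: "real \<Rightarrow> real \<Rightarrow> real \<Rightarrow> real" where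
  "eig_lo w11 w22 n12 =
     ((w11 + w22) - sqrt ((w11 + w22)\<^sup>2 - 4 * (w11 * w22 - n12))) / 2"

definition eig_hi :: "real \<Rightarrow> real \<Rightarrow> real \<Rightarrow> real" where
  "eig_hi w11 w22 n12 =
     ((w11 + w22) + sqrt ((w11 + w22)\<^sup>2 - 4 * (w11 * w22 - n12))) / 2"

lemma eig_roots:
  assumes "(w11 + w22)\<^sup>2 - 4 * (w11 * w22 - n12) \<ge> 0"
  shows "(w11 - eig_lo w11 w22 n12) * (w22 - eig_lo w11 w22 n12) - n12 = 0"
    and "(w11 - eig_hi w11 w22 n12) * (w22 - eig_hi w11 w22 n12) - n12 = 0"
proof -
  define D where "D = (w11 + w22)\<^sup>2 - 4 * (w11 * w22 - n12)"
  have s: "sqrt D * sqrt D = D" using assms D_def by simp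
  show "(w11 - eig_lo w11 w22 n12) * (w22 - eig_lo w11 w22 n12) - n12 = 0"
    unfolding eig_lo_def D_def[symmetric] using s unfolding D_def
    by (simp add: field_simps power2_eq_square)
  show "(w11 - eig_hi w11 w22 n12) * (w22 - eig_hi w11 w22 n12) - n12 = 0"
    unfolding eig_hi_def D_def[symmetric] using s unfolding D_def
    by (simp add: field_simps power2_eq_square)
qed

end

theory Submission
  imports Defs
begin

text \<open>
  Put \<open>r = |t12|\<^sup>2\<close>, a chi-square variable with eight degrees of freedom, so that
  \<open>(s1, s2, r)\<close> has a product density. The eigenvalues only depend on \<open>(s1, s2, r)\<close>:
  \<open>W11 = s1\<close>, \<open>W22 = r + s2\<close> and \<open>|W12|\<^sup>2 = s1 r\<close>, hence \<open>\<lambda>1 \<lambda>2 = s1 s2\<close>.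
  For fixed \<open>s1, s2\<close> the larger eigenvalue \<open>\<lambda>2\<close> is an increasing function of \<open>r\<close>, and for
  fixed \<open>s1, \<lambda>2\<close> the smaller one is \<open>\<lambda>1 = s1 s2 / \<lambda>2\<close>. These two one-dimensional
  substitutions give the joint density of \<open>(\<lambda>1, \<lambda>2, s1)\<close>, supported on \<open>\<lambda>1 < s1 < \<lambda>2\<close>;
  integrating out \<open>s1\<close> leaves \<open>\<integral> (x - \<lambda>1)\<^sup>3 (\<lambda>2 - x)\<^sup>3 / x\<^sup>8 dx = (\<lambda>2 - \<lambda>1)\<^sup>7 / (140 (\<lambda>1 \<lambda>2)\<^sup>4)\<close>,
  which produces the factor \<open>(\<lambda>2 - \<lambda>1)\<^sup>8\<close>.
\<close>

section \<open>Substitution and image measures\<close>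

lemma pred_greaterThan[measurable (raw)]:
  fixes f g :: "'a \<Rightarrow> real"
  assumes [measurable]: "f \<in> borel_measurable M" "g \<in> borel_measurable M"
  shows "Measurable.pred M (\<lambda>x. g x \<in> {f x<..})"
  by (simp add: greaterThan_iff) measurable

lemma image_atLeastAtMost_deriv_nonneg:
  fixes g g' :: "real \<Rightarrow> real"
  assumes "a \<le> b"
    and deriv: "\<And>x. x \<in> {a..b} \<Longrightarrow> (g has_real_derivative g' x) (at x)"
    and nonneg: "\<And>x. x \<in> {a..b} \<Longrightarrow> g' x \<ge> 0"
  shows "g ` {a..b} = {g a..g b}"
proof -
  have mono: "\<And>x y. a \<le> x \<Longrightarrow> x \<le> y \<Longrightarrow> y \<le> b \<Longrightarrow> g x \<le> g y"
    by (rule deriv_nonneg_imp_mono[OF deriv nonneg]) auto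
  have "continuous_on {a..b} g"
    using deriv by (meson DERIV_isCont continuous_at_imp_continuous_on)
  then have "{g a..g b} \<subseteq> g ` {a..b}"
    using IVT'[of g a _ b] \<open>a \<le> b\<close> by (fastforce simp: image_iff)
  then show ?thesis using mono by auto
qed

lemma nn_integral_substitution_UN_atLeastAtMost:
  fixes g g' f :: "real \<Rightarrow> real" and l u :: "nat \<Rightarrow> real"
  assumes S: "S = (\<Union>n. {l n..u n})" and l: "decseq l" and u: "incseq u" and lu: "\<And>n. l n \<le> u n"
    and deriv: "\<And>x. x \<in> S \<Longrightarrow> (g has_real_derivative g' x) (at x)"
    and cont: "continuous_on S g'" and nonneg: "\<And>x. x \<in> S \<Longrightarrow> g' x \<ge> 0"
    and f[measurable]: "f \<in> borel_measurable borel" and f_nonneg: "\<And>x. f x \<ge> 0"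
  shows "(\<integral>\<^sup>+x. f x * indicator (g ` S) x \<partial>lborel) = (\<integral>\<^sup>+x. f (g x) * g' x * indicator S x \<partial>lborel)"
proof -
  define B where "B n = {l n..u n}" for n
  have B_sub: "B n \<subseteq> S" for n unfolding S B_def by auto
  have inc_B: "incseq B" unfolding B_def incseq_def using l u by (auto simp: decseq_def incseq_def)
  have S_borel[measurable]: "S \<in> sets borel" unfolding S by measurable
  have g_cont: "continuous_on S g"
    using deriv by (meson DERIV_isCont continuous_at_imp_continuous_on)
  have deriv_B: "(g has_real_derivative g' x) (at x)" and nonneg_B: "g' x \<ge> 0"
    if "x \<in> {l n..u n}" for n x
    using that deriv nonneg B_sub[of n] unfolding B_def by auto
  have cont_B: "continuous_on {l n..u n} g'" for n
    using continuous_on_subset[OF cont B_sub[of n]] unfolding B_def .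
  have image_B: "g ` B n = {g (l n)..g (u n)}" for n
    unfolding B_def by (rule image_atLeastAtMost_deriv_nonneg[OF lu deriv_B nonneg_B])
  have inc_image: "incseq (\<lambda>n. g ` B n)"
    using inc_B by (auto simp: incseq_def)
  have image_S: "g ` S = (\<Union>n. g ` B n)" unfolding S B_def by auto
  define H where "H x = f (g x) * g' x * indicator S x" for x
  have H_eq: "H = (\<lambda>x. f (indicator S x * g x) * (indicator S x * g' x) * indicator S x)"
    by (auto simp: H_def fun_eq_iff split: split_indicator)
  have [measurable]: "(\<lambda>x. indicator S x * g x) \<in> borel_measurable borel"
    "(\<lambda>x. indicator S x * g' x) \<in> borel_measurable borel"
    using borel_measurable_continuous_on_indicator[OF S_borel g_cont]
      borel_measurable_continuous_on_indicator[OF S_borel cont] by simp_all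
  have H[measurable]: "H \<in> borel_measurable borel" unfolding H_eq by measurable
  have "(\<integral>\<^sup>+x. f x * indicator (g ` S) x \<partial>lborel) = emeasure (density lborel f) (g ` S)"
    unfolding image_S image_B by (subst emeasure_density) (auto intro!: nn_integral_cong split: split_indicator)
  also have "\<dots> = (SUP n. emeasure (density lborel f) (g ` B n))"
    unfolding image_S by (rule SUP_emeasure_incseq[symmetric]) (use inc_image in \<open>auto simp: image_B\<close>)
  also have "\<dots> = (SUP n. (\<integral>\<^sup>+x. f x * indicator {g (l n)..g (u n)} x \<partial>lborel))"
    by (subst emeasure_density) (auto simp: image_B intro!: SUP_cong nn_integral_cong split: split_indicator)
  also have "\<dots> = (SUP n. (\<integral>\<^sup>+x. f (g x) * g' x * indicator {l n..u n} x \<partial>lborel))"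
    by (intro SUP_cong refl nn_integral_substitution deriv_B nonneg_B cont_B)
      (auto simp: lu set_borel_measurable_def)
  also have "\<dots> = (SUP n. (\<integral>\<^sup>+x. ennreal (H x) * indicator (B n) x \<partial>lborel))"
    using B_sub by (force simp: B_def H_def intro!: SUP_cong nn_integral_cong split: split_indicator)
  also have "\<dots> = (SUP n. emeasure (density lborel H) (B n))"
    by (subst emeasure_density) (auto simp: B_def)
  also have "\<dots> = emeasure (density lborel H) S"
    using inc_B by (subst SUP_emeasure_incseq) (auto simp: B_def S)
  also have "\<dots> = (\<integral>\<^sup>+x. f (g x) * g' x * indicator S x \<partial>lborel)"
    by (subst emeasure_density) (auto simp: H_def[symmetric] intro!: nn_integral_cong split: split_indicator, simp add: H_def)
  finally show ?thesis .
qed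

lemma Ioi_eq_UN_atLeastAtMost: "{m<..} = (\<Union>n::nat. {m + 1 / (real n + 1) .. m + real n + 1})"
proof
  show "(\<Union>n::nat. {m + 1 / (real n + 1) .. m + real n + 1}) \<subseteq> {m<..}"
    by (auto simp: add_pos_pos) (smt (verit) divide_pos_pos of_nat_0_le_iff)
  show "{m<..} \<subseteq> (\<Union>n::nat. {m + 1 / (real n + 1) .. m + real n + 1})"
  proof
    fix x assume "x \<in> {m<..}"
    then have d: "x - m > 0" by auto
    obtain n :: nat where n: "max (x - m) (1 / (x - m)) < real n"
      using reals_Archimedean2 by blast
    then have "1 / (real n + 1) \<le> x - m"
      using d by (simp add: divide_le_eq field_simps)
    with n show "x \<in> (\<Union>n::nat. {m + 1 / (real n + 1) .. m + real n + 1})"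
      by (intro UN_I[of n]) auto
  qed
qed

lemma nn_integral_substitution_Ioi:
  fixes g g' f :: "real \<Rightarrow> real"
  assumes deriv: "\<And>x. x > m \<Longrightarrow> (g has_real_derivative g' x) (at x)"
    and cont: "continuous_on {m<..} g'" and nonneg: "\<And>x. x > m \<Longrightarrow> g' x \<ge> 0"
    and f: "f \<in> borel_measurable borel" and f_nonneg: "\<And>x. f x \<ge> 0"
  shows "(\<integral>\<^sup>+x. f x * indicator (g ` {m<..}) x \<partial>lborel) = (\<integral>\<^sup>+x. f (g x) * g' x * indicator {m<..} x \<partial>lborel)"
proof (rule nn_integral_substitution_UN_atLeastAtMost[OF Ioi_eq_UN_atLeastAtMost _ _ _ _ cont _ f f_nonneg])
  show "decseq (\<lambda>n::nat. m + 1 / (real n + 1))"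
    by (auto simp: decseq_def intro!: divide_left_mono)
  show "incseq (\<lambda>n::nat. m + real n + 1)"
    by (auto simp: incseq_def)
  show "m + 1 / (real n + 1) \<le> m + real n + 1" for n :: nat
  proof -
    have "1 / (real n + 1) \<le> 1" by (simp add: divide_le_eq)
    then show ?thesis using of_nat_0_le_iff[of n] by linarith
  qed
qed (use deriv nonneg in auto)

lemma distributed_image_by_nn_integral:
  assumes X: "distributed M N X f"
    and G[measurable]: "G \<in> measurable N K" and h[measurable]: "h \<in> borel_measurable K"
    and eq: "\<And>A. A \<in> sets K \<Longrightarrow>
      (\<integral>\<^sup>+x. f x * indicator A (G x) \<partial>N) = (\<integral>\<^sup>+y. h y * indicator A y \<partial>K)"
  shows "distributed M K (\<lambda>\<omega>. G (X \<omega>)) h"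
proof -
  have [measurable]: "X \<in> measurable M N" "f \<in> borel_measurable N"
    using distributed_measurable[OF X] distributed_borel_measurable[OF X] .
  have "distr M K (\<lambda>\<omega>. G (X \<omega>)) = distr (distr M N X) K G"
    by (subst distr_distr) (auto simp: comp_def)
  also have "\<dots> = distr (density N f) K G"
    using distributed_distr_eq_density[OF X] by simp
  also have "\<dots> = density K h"
  proof (rule measure_eqI)
    fix A assume "A \<in> sets (distr (density N f) K G)"
    then have A: "A \<in> sets K" by simp
    have "emeasure (distr (density N f) K G) A = (\<integral>\<^sup>+x. f x * indicator (G -` A \<inter> space N) x \<partial>N)"
      using A by (simp add: emeasure_distr emeasure_density)
    also have "\<dots> = (\<integral>\<^sup>+x. f x * indicator A (G x) \<partial>N)"
      by (intro nn_integral_cong) (auto split: split_indicator)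
    finally show "emeasure (distr (density N f) K G) A = emeasure (density K h) A"
      using A by (simp add: eq emeasure_density)
  qed simp
  finally show ?thesis unfolding distributed_def by auto
qed

section \<open>Gamma kernels and the chi-square distribution\<close>

text \<open>The \<open>\<Gamma>[k, 2]\<close> density up to normalisation. Only proportionality is asserted, so the
  constant \<open>c\<close> is merely kept positive.\<close>

definition gamma_kernel :: "real \<Rightarrow> real \<Rightarrow> real \<Rightarrow> real" where
  "gamma_kernel c k x = (if 0 < x then c * x powr (k - 1) * exp (- x / 2) else 0)"

lemma gamma_kernel_nonneg: "c \<ge> 0 \<Longrightarrow> gamma_kernel c k x \<ge> 0"
  by (simp add: gamma_kernel_def)

lemma borel_measurable_gamma_kernel[measurable]: "gamma_kernel c k \<in> borel_measurable borel"
  unfolding gamma_kernel_def[abs_def] by measurable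

lemma gamma_density_nonneg: "k > 0 \<Longrightarrow> s > 0 \<Longrightarrow> gamma_density k s x \<ge> 0"
  by (simp add: gamma_density_def)

lemma borel_measurable_gamma_density[measurable]: "gamma_density k s \<in> borel_measurable borel"
  unfolding gamma_density_def[abs_def] by measurable

lemma distributed_square_std_normal:
  assumes X: "distributed M lborel X std_normal_density"
  shows "distributed M lborel (\<lambda>\<omega>. (X \<omega>)\<^sup>2) (gamma_kernel (1 / sqrt (2 * pi)) (1 / 2))"
proof (rule distributed_image_by_nn_integral[OF X])
  fix A :: "real set" assume "A \<in> sets lborel"
  then have A[measurable]: "A \<in> sets borel" by simp
  define c :: real where "c = 1 / sqrt (2 * pi)"
  define F where "F z = std_normal_density z * indicator A (z\<^sup>2)" for z
  have F[measurable]: "F \<in> borel_measurable borel" unfolding F_def by measurable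
  have F_nonneg: "F z \<ge> 0" for z unfolding F_def by simp
  have F_even: "F (- z) = F z" for z unfolding F_def by (simp add: std_normal_density_def)
  have reflect: "(\<integral>\<^sup>+z. ennreal (F z * indicator {..<0} z) \<partial>lborel)
      = (\<integral>\<^sup>+z. ennreal (F z * indicator {0<..} z) \<partial>lborel)"
    by (subst nn_integral_real_affine[where c="-1" and t=0])
      (auto simp: F_even split: split_indicator intro!: nn_integral_cong)
  have kernel_square: "gamma_kernel c (1 / 2) (z\<^sup>2) * (2 * z) = 2 * std_normal_density z" if "z > 0" for z
  proof -
    have "(z\<^sup>2) powr (1 / 2 - 1) = 1 / z"
      using that by (simp add: powr_minus_divide powr_half_sqrt)
    then show ?thesis
      using that by (simp add: gamma_kernel_def c_def std_normal_density_def field_simps)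
  qed
  have square_image: "(\<lambda>z::real. z\<^sup>2) ` {0<..} = {0<..}"
    by (auto intro!: image_eqI[where x="sqrt _"])
  have "(\<integral>\<^sup>+z. ennreal (std_normal_density z) * indicator A (z\<^sup>2) \<partial>lborel)
      = (\<integral>\<^sup>+z. ennreal (F z * indicator {0<..} z) + ennreal (F z * indicator {..<0} z) \<partial>lborel)"
    by (intro nn_integral_cong_AE, rule AE_mp[OF AE_lborel_singleton[of 0]])
      (auto simp: F_def split: split_indicator)
  also have "\<dots> = (\<integral>\<^sup>+z. ennreal (F z * indicator {0<..} z) \<partial>lborel)
      + (\<integral>\<^sup>+z. ennreal (F z * indicator {..<0} z) \<partial>lborel)"
    by (rule nn_integral_add) auto
  also have "\<dots> = 2 * (\<integral>\<^sup>+z. ennreal (F z * indicator {0<..} z) \<partial>lborel)"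
    using reflect by (simp add: mult_2)
  also have "\<dots> = (\<integral>\<^sup>+z. ennreal (gamma_kernel c (1 / 2) (z\<^sup>2) * indicator A (z\<^sup>2) * (2 * z) * indicator {0<..} z) \<partial>lborel)"
    by (subst nn_integral_cmult[symmetric])
      (auto simp: kernel_square F_def ennreal_mult' intro!: nn_integral_cong split: split_indicator)
  also have "\<dots> = (\<integral>\<^sup>+u. ennreal (gamma_kernel c (1 / 2) u * indicator A u * indicator ((\<lambda>z. z\<^sup>2) ` {0<..}) u) \<partial>lborel)"
    by (rule nn_integral_substitution_Ioi[symmetric])
      (auto intro!: derivative_eq_intros continuous_intros simp: gamma_kernel_nonneg c_def)
  also have "\<dots> = (\<integral>\<^sup>+u. ennreal (gamma_kernel c (1 / 2) u) * indicator A u \<partial>lborel)"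
    unfolding square_image by (intro nn_integral_cong) (auto simp: gamma_kernel_def split: split_indicator)
  finally show "(\<integral>\<^sup>+z. ennreal (std_normal_density z) * indicator A (z\<^sup>2) \<partial>lborel)
      = (\<integral>\<^sup>+u. ennreal (gamma_kernel (1 / sqrt (2 * pi)) (1 / 2) u) * indicator A u \<partial>lborel)"
    unfolding c_def .
qed auto

lemma Beta_real_pos: "0 < a \<Longrightarrow> 0 < b \<Longrightarrow> 0 < Beta a (b::real)"
  by (simp add: Beta_def)

lemma gamma_kernel_mult_gamma_kernel:
  assumes x: "x > 0"
  shows "gamma_kernel c1 k1 (x - y) * gamma_kernel c2 k2 y = gamma_kernel (c1 * c2) (k1 + k2 - 1) x
    * (indicator {0..1} (y / x) * ((y / x) powr (k2 - 1) * (1 - y / x) powr (k1 - 1)))"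
proof -
  consider "y \<le> 0" | "y \<ge> x" | "0 < y \<and> y < x" by linarith
  then show ?thesis
  proof cases
    case 3
    have "1 - y / x = (x - y) / x" using x by (simp add: field_simps)
    then have "(y / x) powr (k2 - 1) * (1 - y / x) powr (k1 - 1)
        = y powr (k2 - 1) / x powr (k2 - 1) * ((x - y) powr (k1 - 1) / x powr (k1 - 1))"
      using 3 by (simp add: powr_divide)
    moreover have "x powr (k1 + k2 - 1 - 1) = x powr (k1 - 1) * x powr (k2 - 1)"
      by (simp add: powr_add[symmetric])
    ultimately show ?thesis
      using 3 x by (simp add: gamma_kernel_def field_simps mult_exp_exp)
  qed (use x in \<open>auto simp: gamma_kernel_def zero_le_divide_iff le_divide_eq_1 split: split_indicator\<close>)
qed

lemma gamma_kernel_convolution: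
  assumes "k1 > 0" "k2 > 0" "c1 \<ge> 0" "c2 \<ge> 0"
  shows "(\<integral>\<^sup>+y. ennreal (gamma_kernel c1 k1 (x - y)) * ennreal (gamma_kernel c2 k2 y) \<partial>lborel)
       = ennreal (gamma_kernel (c1 * c2 * Beta k2 k1) (k1 + k2) x)"
proof (cases "x > 0")
  case False
  then have "ennreal (gamma_kernel c1 k1 (x - y)) * ennreal (gamma_kernel c2 k2 y) = 0" for y
    by (auto simp: gamma_kernel_def)
  then show ?thesis using False by (simp only: nn_integral_0_iff_AE) (simp add: gamma_kernel_def)
next
  case x: True
  define h where "h t = indicator {0..1} t * (t powr (k2 - 1) * (1 - t) powr (k1 - 1))" for t :: real
  define K where "K = gamma_kernel (c1 * c2) (k1 + k2 - 1) x"
  have K_nonneg: "K \<ge> 0" unfolding K_def using assms by (simp add: gamma_kernel_nonneg)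
  have [measurable]: "h \<in> borel_measurable borel" unfolding h_def by measurable
  have "(\<integral>\<^sup>+y. ennreal (gamma_kernel c1 k1 (x - y)) * ennreal (gamma_kernel c2 k2 y) \<partial>lborel)
      = (\<integral>\<^sup>+y. ennreal K * ennreal (h (y / x)) \<partial>lborel)"
    using assms K_nonneg
    by (intro nn_integral_cong) (simp add: ennreal_mult'[symmetric] gamma_kernel_nonneg
        gamma_kernel_mult_gamma_kernel[OF x] K_def h_def)
  also have "\<dots> = ennreal K * (\<integral>\<^sup>+y. ennreal (h (y / x)) \<partial>lborel)"
    by (rule nn_integral_cmult) auto
  also have "(\<integral>\<^sup>+y. ennreal (h (y / x)) \<partial>lborel) = ennreal x * (\<integral>\<^sup>+t. ennreal (h t) \<partial>lborel)"
    using x by (subst nn_integral_real_affine[where c=x and t=0]) auto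
  also have "(\<integral>\<^sup>+t. ennreal (h t) \<partial>lborel) = ennreal (Beta k2 k1)"
    unfolding h_def using assms
    by (intro nn_integral_has_integral_lebesgue has_integral_Beta_real) auto
  also have "ennreal K * (ennreal x * ennreal (Beta k2 k1)) = ennreal (K * x * Beta k2 k1)"
    using K_nonneg x Beta_real_pos[of k2 k1] assms by (simp add: ennreal_mult mult.assoc)
  also have "K * x * Beta k2 k1 = gamma_kernel (c1 * c2 * Beta k2 k1) (k1 + k2) x"
    using x by (simp add: K_def gamma_kernel_def powr_diff field_simps power2_eq_square)
  finally show ?thesis .
qed

lemma (in prob_space) distributed_sum_gamma_kernel:
  fixes X :: "'i \<Rightarrow> 'a \<Rightarrow> real"
  assumes "finite I" "I \<noteq> {}" and indep: "indep_vars (\<lambda>_. borel) X I"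
    and X: "\<And>i. i \<in> I \<Longrightarrow> distributed M lborel (X i) (gamma_kernel (c i) (k i))"
    and "\<And>i. i \<in> I \<Longrightarrow> c i > 0" "\<And>i. i \<in> I \<Longrightarrow> k i > 0"
  shows "\<exists>C>0. distributed M lborel (\<lambda>\<omega>. \<Sum>i\<in>I. X i \<omega>) (gamma_kernel C (\<Sum>i\<in>I. k i))"
  using assms
proof (induction rule: finite_ne_induct)
  case (insert i I)
  then obtain C where C: "C > 0"
    and sum_I: "distributed M lborel (\<lambda>\<omega>. \<Sum>i\<in>I. X i \<omega>) (gamma_kernel C (\<Sum>i\<in>I. k i))"
    by (auto intro: indep_vars_subset)
  have k_I: "(\<Sum>i\<in>I. k i) > 0" using insert by (intro sum_pos) auto
  have "distributed M lborel (\<lambda>\<omega>. X i \<omega> + (\<Sum>i\<in>I. X i \<omega>))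
     (\<lambda>x. \<integral>\<^sup>+y. ennreal (gamma_kernel (c i) (k i) (x - y)) * ennreal (gamma_kernel C (\<Sum>i\<in>I. k i) y) \<partial>lborel)"
    by (rule distributed_convolution[OF indep_vars_sum _ sum_I]) (use insert in auto)
  then show ?case
    using insert C k_I Beta_real_pos[OF k_I, of "k i"]
    by (intro exI[of _ "c i * C * Beta (\<Sum>i\<in>I. k i) (k i)"])
      (simp add: gamma_kernel_convolution less_imp_le)
qed auto

lemma (in prob_space) distributed_sum_squares_std_normal:
  fixes X :: "'i \<Rightarrow> 'a \<Rightarrow> real"
  assumes "finite I" "I \<noteq> {}" and indep: "indep_vars (\<lambda>_. borel) X I"
    and X: "\<And>i. i \<in> I \<Longrightarrow> distributed M lborel (X i) std_normal_density"
  shows "\<exists>C>0. distributed M lborel (\<lambda>\<omega>. \<Sum>i\<in>I. (X i \<omega>)\<^sup>2) (gamma_kernel C (card I / 2))"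
proof -
  have "indep_vars (\<lambda>_. borel) (\<lambda>i \<omega>. (X i \<omega>)\<^sup>2) I"
    using indep by (rule indep_vars_compose2) auto
  then show ?thesis
    using distributed_sum_gamma_kernel[of I "\<lambda>i \<omega>. (X i \<omega>)\<^sup>2" "\<lambda>_. 1 / sqrt (2 * pi)" "\<lambda>_. 1 / 2"]
      assms distributed_square_std_normal[OF X] by simp
qed

section \<open>Independence of the three ingredients\<close>

lemma (in prob_space) distr_pair_eq_indep_var_compose:
  assumes indep: "indep_var S X T Y"
    and g1[measurable]: "g1 \<in> measurable S N1" and g2[measurable]: "g2 \<in> measurable T N2"
  shows "distr M N1 (\<lambda>\<omega>. g1 (X \<omega>)) \<Otimes>\<^sub>M distr M N2 (\<lambda>\<omega>. g2 (Y \<omega>))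
    = distr M (N1 \<Otimes>\<^sub>M N2) (\<lambda>\<omega>. (g1 (X \<omega>), g2 (Y \<omega>)))"
proof -
  have [measurable]: "X \<in> measurable M S" "Y \<in> measurable M T"
    and XY: "distr M S X \<Otimes>\<^sub>M distr M T Y = distr M (S \<Otimes>\<^sub>M T) (\<lambda>\<omega>. (X \<omega>, Y \<omega>))"
    using indep unfolding indep_var_distribution_eq by auto
  have "sigma_finite_measure (distr (distr M T Y) N2 g2)"
    by (intro prob_space_imp_sigma_finite prob_space.prob_space_distr prob_space_distr) auto
  then have "distr (distr M S X) N1 g1 \<Otimes>\<^sub>M distr (distr M T Y) N2 g2
      = distr (distr M S X \<Otimes>\<^sub>M distr M T Y) (N1 \<Otimes>\<^sub>M N2) (\<lambda>(x, y). (g1 x, g2 y))"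
    by (intro pair_measure_distr) auto
  then show ?thesis
    unfolding XY by (simp add: distr_distr comp_def)
qed

lemma (in prob_space) distr_pair_eq_indep_vars_restrict:
  assumes "indep_vars M' X I" "J \<inter> K = {}" "J \<subseteq> I" "K \<subseteq> I"
    and "f \<in> measurable (Pi\<^sub>M J M') N1" "g \<in> measurable (Pi\<^sub>M K M') N2"
  shows "distr M N1 (\<lambda>\<omega>. f (\<lambda>i\<in>J. X i \<omega>)) \<Otimes>\<^sub>M distr M N2 (\<lambda>\<omega>. g (\<lambda>i\<in>K. X i \<omega>))
    = distr M (N1 \<Otimes>\<^sub>M N2) (\<lambda>\<omega>. (f (\<lambda>i\<in>J. X i \<omega>), g (\<lambda>i\<in>K. X i \<omega>)))"
  using distr_pair_eq_indep_var_compose[OF indep_var_restrict[OF assms(1-4)] assms(5,6)] .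

lemma borel_measurable_sum_squares_PiM:
  assumes "J \<subseteq> K"
  shows "(\<lambda>h. \<Sum>i\<in>J. (h i)\<^sup>2) \<in> borel_measurable (Pi\<^sub>M K (\<lambda>_. borel :: real measure))"
proof (rule borel_measurable_sum)
  fix i assume "i \<in> J"
  then have "(\<lambda>h. h i) \<in> borel_measurable (Pi\<^sub>M K (\<lambda>_. borel :: real measure))"
    using assms by (intro measurable_component_singleton) auto
  then show "(\<lambda>h. (h i)\<^sup>2) \<in> borel_measurable (Pi\<^sub>M K (\<lambda>_. borel :: real measure))"
    by measurable
qed

lemma (in prob_space) distributed_gamma_gamma_chi_square:
  fixes X :: "nat \<Rightarrow> 'a \<Rightarrow> real"
  assumes a: "a > -1" and indep: "indep_vars (\<lambda>_. borel) X {..<10}"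
    and gauss: "\<And>i. i < 8 \<Longrightarrow> distributed M lborel (X i) std_normal_density"
    and X8: "distributed M lborel (X 8) (gamma_density (a + 1) 2)"
    and X9: "distributed M lborel (X 9) (gamma_density (a + 5) 2)"
  shows "\<exists>c>0. distributed M (lborel \<Otimes>\<^sub>M (lborel \<Otimes>\<^sub>M lborel)) (\<lambda>\<omega>. (X 8 \<omega>, X 9 \<omega>, \<Sum>i<8. (X i \<omega>)\<^sup>2))
      (\<lambda>(x, y, r). ennreal (gamma_density (a + 1) 2 x * gamma_density (a + 5) 2 y * gamma_kernel c 4 r))"
proof -
  define r where "r \<omega> = (\<Sum>i<8. (X i \<omega>)\<^sup>2)" for \<omega>
  obtain c where c: "c > 0" and r: "distributed M lborel r (gamma_kernel c 4)"
    using distributed_sum_squares_std_normal[of "{..<8}" X] indep_vars_subset[OF indep] gauss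
    by (fastforce simp: r_def[abs_def] lessThan_empty_iff)
  have [measurable]: "(\<lambda>h. \<Sum>i<8. (h i)\<^sup>2) \<in> borel_measurable (Pi\<^sub>M K (\<lambda>_. borel :: real measure))"
    if "{..<8} \<subseteq> K" for K
    using borel_measurable_sum_squares_PiM[OF that] .
  have indep_y_r: "distr M lborel (X 9) \<Otimes>\<^sub>M distr M lborel r = distr M (lborel \<Otimes>\<^sub>M lborel) (\<lambda>\<omega>. (X 9 \<omega>, r \<omega>))"
    using distr_pair_eq_indep_vars_restrict[OF indep, of "{9}" "{..<8}" "\<lambda>h. h 9" lborel
        "\<lambda>h. \<Sum>i<8. (h i)\<^sup>2" lborel]
    by (simp add: r_def[abs_def] measurable_component_singleton)
  have indep_x_yr: "distr M lborel (X 8) \<Otimes>\<^sub>M distr M (lborel \<Otimes>\<^sub>M lborel) (\<lambda>\<omega>. (X 9 \<omega>, r \<omega>))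
      = distr M (lborel \<Otimes>\<^sub>M (lborel \<Otimes>\<^sub>M lborel)) (\<lambda>\<omega>. (X 8 \<omega>, X 9 \<omega>, r \<omega>))"
    using distr_pair_eq_indep_vars_restrict[OF indep, of "{8}" "insert 9 {..<8}" "\<lambda>h. h 8" lborel
        "\<lambda>h. (h 9, \<Sum>i<8. (h i)\<^sup>2)" "lborel \<Otimes>\<^sub>M lborel"]
    by (simp add: r_def[abs_def] measurable_component_singleton measurable_Pair measurable_lborel1)
  have lborel2: "sigma_finite_measure (lborel \<Otimes>\<^sub>M lborel :: (real \<times> real) measure)"
    by (intro sigma_finite_pair_measure lborel.sigma_finite_measure_axioms)
  have "distributed M (lborel \<Otimes>\<^sub>M (lborel \<Otimes>\<^sub>M lborel)) (\<lambda>\<omega>. (X 8 \<omega>, X 9 \<omega>, r \<omega>))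
      (\<lambda>(x, yr). ennreal (gamma_density (a + 1) 2 x)
        * (case yr of (y, r) \<Rightarrow> ennreal (gamma_density (a + 5) 2 y) * ennreal (gamma_kernel c 4 r)))"
    by (intro distributed_joint_indep'[OF lborel.sigma_finite_measure_axioms lborel2 X8]
        distributed_joint_indep'[OF lborel.sigma_finite_measure_axioms lborel.sigma_finite_measure_axioms X9 r]
        indep_y_r indep_x_yr)
  also have "(\<lambda>(x, yr). ennreal (gamma_density (a + 1) 2 x)
        * (case yr of (y, r) \<Rightarrow> ennreal (gamma_density (a + 5) 2 y) * ennreal (gamma_kernel c 4 r)))
      = (\<lambda>(x, y, r). ennreal (gamma_density (a + 1) 2 x * gamma_density (a + 5) 2 y * gamma_kernel c 4 r))"
    using a c by (auto simp: fun_eq_iff ennreal_mult gamma_density_nonneg gamma_kernel_nonneg mult.assoc)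
  finally show ?thesis using c unfolding r_def by blast
qed

section \<open>Eigenvalue coordinates\<close>

text \<open>For fixed \<open>x, y\<close> the larger root \<open>t\<close> determines \<open>r\<close>, and the product of the roots is \<open>x y\<close>.\<close>

lemma
  fixes x y t :: real
  assumes x: "x > 0" and y: "y > 0" and t: "t > max x y"
  defines "r \<equiv> t + x * y / t - x - y"
  shows eig_lo_reparam: "eig_lo x (r + y) (x * r) = x * y / t"
    and eig_hi_reparam: "eig_hi x (r + y) (x * r) = t"
proof -
  have t_pos: "t > 0" using t x by auto
  have "x * y < t * t" using t x y by (intro mult_strict_mono) auto
  then have "t - x * y / t > 0" using t_pos by (simp add: field_simps)
  moreover have "(x + (r + y))\<^sup>2 - 4 * (x * (r + y) - x * r) = (t - x * y / t)\<^sup>2"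
    unfolding r_def using t_pos by (simp add: field_simps power2_eq_square)
  ultimately have sqrt_disc: "sqrt ((x + (r + y))\<^sup>2 - 4 * (x * (r + y) - x * r)) = t - x * y / t"
    by simp
  have trace: "x + (r + y) = t + x * y / t" unfolding r_def by simp
  show "eig_lo x (r + y) (x * r) = x * y / t" "eig_hi x (r + y) (x * r) = t"
    unfolding eig_lo_def eig_hi_def sqrt_disc unfolding trace by simp_all
qed

lemma eig_reparam_image:
  fixes x y :: real
  assumes x: "x > 0" and y: "y > 0"
  shows "(\<lambda>t. t + x * y / t - x - y) ` {max x y<..} = {0<..}"
proof
  show "(\<lambda>t. t + x * y / t - x - y) ` {max x y<..} \<subseteq> {0<..}"
  proof (rule image_subsetI)
    fix t assume t: "t \<in> {max x y<..}"
    then have "t > 0" using x by auto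
    then have "t + x * y / t - x - y = (t - x) * (t - y) / t" by (simp add: field_simps)
    then show "t + x * y / t - x - y \<in> {0<..}" using t \<open>t > 0\<close> by simp
  qed
  show "{0<..} \<subseteq> (\<lambda>t. t + x * y / t - x - y) ` {max x y<..}"
  proof
    fix r :: real assume "r \<in> {0<..}"
    then have r: "r > 0" by simp
    define D where "D = (x + (y + r))\<^sup>2 - 4 * (x * (y + r) - x * r)"
    define t where "t = eig_hi x (y + r) (x * r)"
    have D: "D = (x - y - r)\<^sup>2 + 4 * x * r" "D = (y - x - r)\<^sup>2 + 4 * y * r"
      unfolding D_def by (simp_all add: algebra_simps power2_eq_square)
    have t_eq: "t = (x + (y + r) + sqrt D) / 2" unfolding t_def eig_hi_def D_def ..
    have "x - y - r < sqrt D"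
      using x r by (intro real_less_rsqrt) (simp add: D(1))
    moreover have "y - x - r < sqrt D"
      using y r by (intro real_less_rsqrt) (simp add: D(2))
    ultimately have tx: "t > x" and ty: "t > y" unfolding t_eq by auto
    have "D \<ge> 0" using y r by (simp add: D(2))
    then have "(x - t) * ((y + r) - t) - x * r = 0"
      using eig_roots(2)[of x "y + r" "x * r"] unfolding D_def t_def by simp
    then have "t + x * y / t - x - y = r"
      using tx x by (simp add: field_simps)
    with tx ty show "r \<in> (\<lambda>t. t + x * y / t - x - y) ` {max x y<..}"
      by (intro image_eqI[of _ _ t]) auto
  qed
qed

lemma nn_integral_eig_hi_substitution:
  fixes x y :: real and g :: "real \<Rightarrow> real" and A :: "(real \<times> real) set"
  assumes x: "x > 0" and y: "y > 0"
    and g[measurable]: "g \<in> borel_measurable borel" and g_nonneg: "\<And>r. g r \<ge> 0"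
    and g_supp: "\<And>r. r \<le> 0 \<Longrightarrow> g r = 0" and A[measurable]: "A \<in> sets (borel \<Otimes>\<^sub>M borel)"
  shows "(\<integral>\<^sup>+r. ennreal (g r * indicator A (eig_lo x (r + y) (x * r), eig_hi x (r + y) (x * r))) \<partial>lborel)
    = (\<integral>\<^sup>+t. ennreal (g (t + x * y / t - x - y) * indicator A (x * y / t, t) * (1 - x * y / t\<^sup>2)
        * indicator {max x y<..} t) \<partial>lborel)"
proof -
  define f where "f r = g r * indicator A (eig_lo x (r + y) (x * r), eig_hi x (r + y) (x * r))" for r
  define R where "R t = t + x * y / t - x - y" for t
  have f[measurable]: "f \<in> borel_measurable borel" unfolding f_def eig_lo_def eig_hi_def by measurable
  have "(\<integral>\<^sup>+r. ennreal (f r) \<partial>lborel) = (\<integral>\<^sup>+r. ennreal (f r * indicator (R ` {max x y<..}) r) \<partial>lborel)"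
    unfolding R_def eig_reparam_image[OF x y]
    by (intro nn_integral_cong) (auto simp: f_def g_supp split: split_indicator)
  also have "\<dots> = (\<integral>\<^sup>+t. ennreal (f (R t) * (1 - x * y / t\<^sup>2) * indicator {max x y<..} t) \<partial>lborel)"
  proof (rule nn_integral_substitution_Ioi)
    fix t assume t: "t > max x y"
    then have "t \<noteq> 0" using x by auto
    then show "(R has_real_derivative (1 - x * y / t\<^sup>2)) (at t)"
      unfolding R_def by (auto intro!: derivative_eq_intros simp: power2_eq_square field_simps)
    have "x * y \<le> t\<^sup>2" using t x y unfolding power2_eq_square by (intro mult_mono) auto
    then show "0 \<le> 1 - x * y / t\<^sup>2" using \<open>t \<noteq> 0\<close> by (simp add: field_simps)
  next
    show "continuous_on {max x y<..} (\<lambda>t. 1 - x * y / t\<^sup>2)"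
      using x by (intro continuous_intros) auto
  qed (fact f, simp add: f_def g_nonneg)
  also have "\<dots> = (\<integral>\<^sup>+t. ennreal (g (R t) * indicator A (x * y / t, t) * (1 - x * y / t\<^sup>2)
      * indicator {max x y<..} t) \<partial>lborel)"
  proof (rule nn_integral_cong)
    fix t
    show "ennreal (f (R t) * (1 - x * y / t\<^sup>2) * indicator {max x y<..} t)
      = ennreal (g (R t) * indicator A (x * y / t, t) * (1 - x * y / t\<^sup>2) * indicator {max x y<..} t)"
      using eig_lo_reparam[OF x y, of t] eig_hi_reparam[OF x y, of t]
      by (cases "t > max x y") (simp_all add: f_def R_def)
  qed
  finally show ?thesis unfolding f_def R_def .
qed

text \<open>Up to normalisation, the joint density of \<open>(\<lambda>1, \<lambda>2, s1)\<close>.\<close>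

definition eigenvalue_s1_density :: "real \<Rightarrow> real \<Rightarrow> real \<times> real \<times> real \<Rightarrow> real" where
  "eigenvalue_s1_density C a = (\<lambda>(l, t, x). if 0 < l \<and> l < x \<and> x < t
     then C * (l * t) powr a * (l * t) ^ 4 * (t - l) * exp (- (l + t) / 2) * ((x - l) ^ 3 * (t - x) ^ 3 / x ^ 8)
     else 0)"

lemma borel_measurable_eigenvalue_s1_density[measurable]:
  "eigenvalue_s1_density C a \<in> borel_measurable (borel \<Otimes>\<^sub>M (borel \<Otimes>\<^sub>M borel))"
  unfolding eigenvalue_s1_density_def by measurable

lemma gamma_densities_eig_coordinates_pos:
  fixes a c x t l :: real
  assumes a: "a > -1" and l: "0 < l" "l < x" and t: "x < t"
  defines "y \<equiv> t / x * l"
    and "C \<equiv> c / (Gamma (a + 1) * 2 powr (a + 1) * (Gamma (a + 5) * 2 powr (a + 5)))"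
  shows "t / x * (gamma_density (a + 1) 2 x * gamma_density (a + 5) 2 y
      * gamma_kernel c 4 (t + x * y / t - x - y) * (1 - x * y / t\<^sup>2) * indicator {max x y<..} t)
    = C * (l * t) powr a * (l * t) ^ 4 * (t - l) * exp (- (l + t) / 2) * ((x - l) ^ 3 * (t - x) ^ 3 / x ^ 8)"
proof -
  have x: "x > 0" and t_pos: "t > 0" using l t by auto
  have l_eq: "x * y / t = l" unfolding y_def using x t_pos by simp
  have y: "0 < y" "y < t" unfolding y_def using x t_pos l by (simp_all add: field_simps)
  define R where "R = (t - x) * (x - l) / x"
  have R: "t + x * y / t - x - y = R" "R > 0"
    unfolding l_eq R_def y_def using x t l by (simp add: field_simps, simp)
  have dens_x: "gamma_density (a + 1) 2 x = x powr a * exp (- x / 2) / (Gamma (a + 1) * 2 powr (a + 1))"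
    using x by (simp add: gamma_density_def)
  have "y powr (a + 4) = (l * t) powr a * (l * t) ^ 4 / (x powr a * x ^ 4)"
    unfolding y_def using x t_pos l by (simp add: powr_add powr_divide powr_numeral field_simps)
  then have dens_y: "gamma_density (a + 5) 2 y
      = (l * t) powr a * (l * t) ^ 4 / (x powr a * x ^ 4) * exp (- y / 2) / (Gamma (a + 5) * 2 powr (a + 5))"
    using y by (simp add: gamma_density_def add.commute)
  have kernel_R: "gamma_kernel c 4 R = c * R ^ 3 * exp (- R / 2)"
    using R by (simp add: gamma_kernel_def powr_numeral)
  have exps: "exp (- x / 2) * exp (- y / 2) * exp (- R / 2) = exp (- (l + t) / 2)"
    unfolding mult_exp_exp using R(1) l_eq by (simp add: field_simps)
  have one_minus: "1 - x * y / t\<^sup>2 = (t - l) / t"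
    using l_eq t_pos by (simp add: power2_eq_square field_simps)
  have "t / x * (gamma_density (a + 1) 2 x * gamma_density (a + 5) 2 y
      * gamma_kernel c 4 (t + x * y / t - x - y) * (1 - x * y / t\<^sup>2) * indicator {max x y<..} t)
    = t / x * (x powr a * exp (- x / 2) / (Gamma (a + 1) * 2 powr (a + 1))
      * ((l * t) powr a * (l * t) ^ 4 / (x powr a * x ^ 4) * exp (- y / 2) / (Gamma (a + 5) * 2 powr (a + 5)))
      * (c * R ^ 3 * exp (- R / 2)) * ((t - l) / t))"
    using y t by (simp only: R(1) dens_x dens_y kernel_R one_minus) simp
  also have "\<dots> = (exp (- x / 2) * exp (- y / 2) * exp (- R / 2))
      * (C * (l * t) powr a * (l * t) ^ 4 * (t - l)) * (R ^ 3 / (x * x ^ 4))"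
  proof -
    have "Gamma (a + 1) > 0" "Gamma (a + 5) > 0" using a by (simp_all add: Gamma_real_pos)
    then show ?thesis using x t_pos unfolding C_def by (simp add: field_simps)
  qed
  also have "R ^ 3 / (x * x ^ 4) = (x - l) ^ 3 * (t - x) ^ 3 / x ^ 8"
    unfolding R_def by (simp add: power_divide power_mult_distrib eval_nat_numeral mult_ac)
  finally show ?thesis unfolding exps by (simp add: mult_ac)
qed

lemma gamma_densities_eig_coordinates:
  fixes a c x t l :: real
  assumes a: "a > -1" and x: "x > 0" and t: "t > x"
  defines "y \<equiv> t / x * l"
    and "C \<equiv> c / (Gamma (a + 1) * 2 powr (a + 1) * (Gamma (a + 5) * 2 powr (a + 5)))"
  shows "t / x * (gamma_density (a + 1) 2 x * gamma_density (a + 5) 2 y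
      * gamma_kernel c 4 (t + x * y / t - x - y) * (1 - x * y / t\<^sup>2) * indicator {max x y<..} t)
    = eigenvalue_s1_density C a (l, t, x)"
proof -
  have t_pos: "t > 0" using x t by simp
  consider "l \<le> 0" | "l \<ge> x" | "0 < l \<and> l < x" by linarith
  then show ?thesis
  proof cases
    case 1
    then have "y \<le> 0" unfolding y_def using x t_pos by (simp add: divide_nonpos_pos mult_nonneg_nonpos)
    with 1 show ?thesis by (simp add: gamma_density_def eigenvalue_s1_density_def)
  next
    case 2
    then have "y \<ge> t" unfolding y_def using x t_pos by (simp add: field_simps)
    with 2 show ?thesis by (simp add: eigenvalue_s1_density_def)
  next
    case 3
    with gamma_densities_eig_coordinates_pos[OF a _ _ t, of l c] t show ?thesis
      by (simp add: y_def C_def eigenvalue_s1_density_def)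
  qed
qed

lemma nn_integral_eig_lo_substitution:
  fixes A :: "(real \<times> real) set" and a c x t :: real
  assumes a: "a > -1" and x: "x > 0" and t: "t > x" and A[measurable]: "A \<in> sets (borel \<Otimes>\<^sub>M borel)"
  defines "C \<equiv> c / (Gamma (a + 1) * 2 powr (a + 1) * (Gamma (a + 5) * 2 powr (a + 5)))"
  shows "(\<integral>\<^sup>+y. ennreal (indicator A (x * y / t, t) * (gamma_density (a + 1) 2 x * gamma_density (a + 5) 2 y
        * gamma_kernel c 4 (t + x * y / t - x - y) * (1 - x * y / t\<^sup>2) * indicator {max x y<..} t)) \<partial>lborel)
    = (\<integral>\<^sup>+l. ennreal (eigenvalue_s1_density C a (l, t, x) * indicator A (l, t)) \<partial>lborel)"
proof -
  define F where "F y = indicator A (x * y / t, t) * (gamma_density (a + 1) 2 x * gamma_density (a + 5) 2 y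
      * gamma_kernel c 4 (t + x * y / t - x - y) * (1 - x * y / t\<^sup>2) * indicator {max x y<..} t)" for y
  have [measurable]: "(\<lambda>y. ennreal (F y)) \<in> borel_measurable borel"
    "(\<lambda>l. ennreal (F (t / x * l))) \<in> borel_measurable borel"
    unfolding F_def by measurable
  have "(\<integral>\<^sup>+y. ennreal (F y) \<partial>lborel) = ennreal (t / x) * (\<integral>\<^sup>+l. ennreal (F (t / x * l)) \<partial>lborel)"
    using x t by (subst nn_integral_real_affine[where t=0 and c="t / x"]) auto
  also have "\<dots> = (\<integral>\<^sup>+l. ennreal (t / x * F (t / x * l)) \<partial>lborel)"
    using x t by (subst nn_integral_cmult[symmetric]) (auto simp: ennreal_mult'[symmetric])
  also have "\<dots> = (\<integral>\<^sup>+l. ennreal (eigenvalue_s1_density C a (l, t, x) * indicator A (l, t)) \<partial>lborel)"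
  proof (rule nn_integral_cong)
    fix l
    have "t / x * F (t / x * l) = indicator A (l, t) * (t / x * (gamma_density (a + 1) 2 x
        * gamma_density (a + 5) 2 (t / x * l) * gamma_kernel c 4 (t + x * (t / x * l) / t - x - t / x * l)
        * (1 - x * (t / x * l) / t\<^sup>2) * indicator {max x (t / x * l)<..} t))"
      using x by (simp add: F_def ac_simps)
    then show "ennreal (t / x * F (t / x * l)) = ennreal (eigenvalue_s1_density C a (l, t, x) * indicator A (l, t))"
      unfolding gamma_densities_eig_coordinates[OF a x t] C_def by (simp add: mult.commute)
  qed
  finally show ?thesis unfolding F_def .
qed

lemma nn_integral_cubes_div_power8:
  fixes l1 l2 :: real
  assumes l: "0 < l1" "l1 < l2"
  shows "(\<integral>\<^sup>+x. ennreal (indicator {l1..l2} x * ((x - l1) ^ 3 * (l2 - x) ^ 3 / x ^ 8)) \<partial>lborel)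
        = ennreal ((l2 - l1) ^ 7 / (140 * (l1 * l2) ^ 4))"
proof -
  \<comment> \<open>The substitution \<open>v = 1/x - 1/l2\<close> turns the integrand into \<open>(l1 l2)^3 (d - v)^3 v^3\<close>,
    a Beta(4,4) kernel; \<open>G\<close> is its antiderivative.\<close>
  define d where "d = 1 / l1 - 1 / l2"
  define G where "G v = d ^ 3 * v ^ 4 / 4 - 3 * d\<^sup>2 * v ^ 5 / 5 + d * v ^ 6 / 2 - v ^ 7 / 7" for v :: real
  define F where "F x = - ((l1 * l2) ^ 3) * G (1 / x - 1 / l2)" for x :: real
  have G': "(G has_real_derivative ((d - v) ^ 3 * v ^ 3)) (at v)" for v
    unfolding G_def
    by (auto intro!: derivative_eq_intros simp: algebra_simps power2_eq_square power3_eq_cube numeral_eq_Suc)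
  have F': "(F has_real_derivative ((x - l1) ^ 3 * (l2 - x) ^ 3 / x ^ 8)) (at x)" if x: "x > 0" for x
  proof -
    have inv: "((\<lambda>x. 1 / x - 1 / l2) has_real_derivative (- 1 / x\<^sup>2)) (at x)"
      using x by (auto intro!: derivative_eq_intros simp: power2_eq_square)
    have e1: "d - (1 / x - 1 / l2) = (x - l1) / (l1 * x)" and e2: "1 / x - 1 / l2 = (l2 - x) / (l2 * x)"
      using l x unfolding d_def by (simp_all add: field_simps)
    have "- ((l1 * l2) ^ 3) * (((d - (1 / x - 1 / l2)) ^ 3 * (1 / x - 1 / l2) ^ 3) * (- 1 / x\<^sup>2))
        = (x - l1) ^ 3 * (l2 - x) ^ 3 / x ^ 8"
      unfolding e1 unfolding e2 using l x by (simp add: field_simps power_mult_distrib power_divide)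
    with DERIV_cmult[OF DERIV_chain2[OF G' inv], of "- ((l1 * l2) ^ 3)"] show ?thesis
      unfolding F_def[abs_def] by simp
  qed
  have "((\<lambda>x. (x - l1) ^ 3 * (l2 - x) ^ 3 / x ^ 8) has_integral (F l2 - F l1)) {l1..l2}"
    using l by (intro fundamental_theorem_of_calculus)
      (auto intro!: has_field_derivative_imp_has_derivative
        has_real_derivative_iff_has_vector_derivative[THEN iffD1] DERIV_subset[OF F'])
  then have "(\<integral>\<^sup>+x. ennreal (indicator {l1..l2} x * ((x - l1) ^ 3 * (l2 - x) ^ 3 / x ^ 8)) \<partial>lborel)
      = ennreal (F l2 - F l1)"
    using l by (intro nn_integral_has_integral_lebesgue) auto
  also have "F l2 - F l1 = (l2 - l1) ^ 7 / (140 * (l1 * l2) ^ 4)"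
    unfolding F_def G_def d_def using l by (simp add: field_simps power_mult_distrib power_def)
  finally show ?thesis .
qed

definition eigenvalue_density :: "real \<Rightarrow> real \<Rightarrow> real \<times> real \<Rightarrow> real" where
  "eigenvalue_density C a = (\<lambda>(x, y).
     if 0 < x \<and> x < y then C * (x * y) powr a * exp (- (x + y) / 2) * (y - x) ^ 8 else 0)"

lemma borel_measurable_eigenvalue_density[measurable]:
  "eigenvalue_density C a \<in> borel_measurable (borel \<Otimes>\<^sub>M borel)"
  unfolding eigenvalue_density_def by measurable

lemma nn_integral_eigenvalue_s1_density:
  assumes "C \<ge> 0"
  shows "(\<integral>\<^sup>+x. ennreal (eigenvalue_s1_density C a (l, t, x)) \<partial>lborel)
    = ennreal (eigenvalue_density (C / 140) a (l, t))"
proof (cases "0 < l \<and> l < t")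
  case True
  define K where "K = C * (l * t) powr a * (l * t) ^ 4 * (t - l) * exp (- (l + t) / 2)"
  have K_nonneg: "K \<ge> 0" using True assms by (simp add: K_def)
  have "eigenvalue_s1_density C a (l, t, x) = K * (indicator {l..t} x * ((x - l) ^ 3 * (t - x) ^ 3 / x ^ 8))" for x
    using True by (auto simp: eigenvalue_s1_density_def K_def split: split_indicator)
  then have "(\<integral>\<^sup>+x. ennreal (eigenvalue_s1_density C a (l, t, x)) \<partial>lborel)
      = ennreal K * (\<integral>\<^sup>+x. ennreal (indicator {l..t} x * ((x - l) ^ 3 * (t - x) ^ 3 / x ^ 8)) \<partial>lborel)"
    by (simp only: ennreal_mult'[OF K_nonneg]) (rule nn_integral_cmult, measurable)
  also have "\<dots> = ennreal (K * ((t - l) ^ 7 / (140 * (l * t) ^ 4)))"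
    using True K_nonneg by (simp only: nn_integral_cubes_div_power8 ennreal_mult')
  also have "K * ((t - l) ^ 7 / (140 * (l * t) ^ 4)) = eigenvalue_density (C / 140) a (l, t)"
  proof -
    define d where "d = t - l"
    have "d * d ^ 7 = d ^ 8" by (simp add: eval_nat_numeral)
    moreover have "(l * t) ^ 4 > 0" using True by simp
    ultimately show ?thesis
      using True unfolding K_def eigenvalue_density_def d_def[symmetric]
      by (simp add: field_simps) (simp add: d_def)
  qed
  finally show ?thesis .
next
  case False
  then have "eigenvalue_s1_density C a (l, t, x) = 0" for x
    by (auto simp: eigenvalue_s1_density_def)
  with False show ?thesis by (auto simp: eigenvalue_density_def)
qed

section \<open>The joint density of the eigenvalues\<close>

text \<open>\<open>(x, y, r)\<close> stands for \<open>(s1, s2, |t12|\<^sup>2)\<close>: then \<open>W11 = x\<close>, \<open>W22 = r + y\<close> and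
  \<open>|W12|\<^sup>2 = x r\<close>.\<close>

definition eigenvalue_pair :: "real \<times> real \<times> real \<Rightarrow> real \<times> real" where
  "eigenvalue_pair = (\<lambda>(x, y, r).
     (eig_lo ((sqrt x)\<^sup>2) (r + (sqrt y)\<^sup>2) ((sqrt x)\<^sup>2 * r), eig_hi ((sqrt x)\<^sup>2) (r + (sqrt y)\<^sup>2) ((sqrt x)\<^sup>2 * r)))"

lemma measurable_eigenvalue_pair[measurable]:
  "eigenvalue_pair \<in> measurable (borel \<Otimes>\<^sub>M (borel \<Otimes>\<^sub>M borel)) (borel \<Otimes>\<^sub>M borel)"
  unfolding eigenvalue_pair_def eig_lo_def eig_hi_def by measurable

lemma nn_integral_eigenvalue_pair_coordinates:
  fixes A :: "(real \<times> real) set"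
  assumes a: "a > -1" and c: "c > 0" and A[measurable]: "A \<in> sets (borel \<Otimes>\<^sub>M borel)"
  defines "C \<equiv> c / (Gamma (a + 1) * 2 powr (a + 1) * (Gamma (a + 5) * 2 powr (a + 5)))"
  shows "(\<integral>\<^sup>+x. \<integral>\<^sup>+y. \<integral>\<^sup>+r. ennreal (gamma_density (a + 1) 2 x * gamma_density (a + 5) 2 y
            * gamma_kernel c 4 r * indicator A (eigenvalue_pair (x, y, r))) \<partial>lborel \<partial>lborel \<partial>lborel)
     = (\<integral>\<^sup>+x. \<integral>\<^sup>+t. \<integral>\<^sup>+l. ennreal (eigenvalue_s1_density C a (l, t, x) * indicator A (l, t))
            \<partial>lborel \<partial>lborel \<partial>lborel)"
proof -
  define f where "f x y = gamma_density (a + 1) 2 x * gamma_density (a + 5) 2 y" for x y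
  have f_nonneg: "f x y \<ge> 0" for x y
    using a by (simp add: f_def gamma_density_def)
  define F where "F x y t = indicator A (x * y / t, t) * (f x y * gamma_kernel c 4 (t + x * y / t - x - y)
      * (1 - x * y / t\<^sup>2) * indicator {max x y<..} t)" for x y t :: real
  have "(\<integral>\<^sup>+x. \<integral>\<^sup>+y. \<integral>\<^sup>+r. ennreal (f x y * gamma_kernel c 4 r * indicator A (eigenvalue_pair (x, y, r)))
      \<partial>lborel \<partial>lborel \<partial>lborel) = (\<integral>\<^sup>+x. \<integral>\<^sup>+y. \<integral>\<^sup>+t. ennreal (F x y t) \<partial>lborel \<partial>lborel \<partial>lborel)"
  proof (rule nn_integral_cong, rule nn_integral_cong)
    fix x y :: real
    show "(\<integral>\<^sup>+r. ennreal (f x y * gamma_kernel c 4 r * indicator A (eigenvalue_pair (x, y, r))) \<partial>lborel)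
        = (\<integral>\<^sup>+t. ennreal (F x y t) \<partial>lborel)"
    proof (cases "x > 0 \<and> y > 0")
      case True
      then show ?thesis
        using nn_integral_eig_hi_substitution[of x y "\<lambda>r. f x y * gamma_kernel c 4 r" A] c f_nonneg
        by (simp add: F_def eigenvalue_pair_def gamma_kernel_nonneg mult.assoc)
          (simp add: gamma_kernel_def mult_ac)
    qed (auto simp: f_def F_def gamma_density_def)
  qed
  also have "\<dots> = (\<integral>\<^sup>+x. \<integral>\<^sup>+t. \<integral>\<^sup>+y. ennreal (F x y t) \<partial>lborel \<partial>lborel \<partial>lborel)"
    by (rule nn_integral_cong, rule lborel_pair.Fubini'[symmetric]) (unfold F_def f_def, measurable)
  also have "\<dots> = (\<integral>\<^sup>+x. \<integral>\<^sup>+t. \<integral>\<^sup>+l. ennreal (eigenvalue_s1_density C a (l, t, x) * indicator A (l, t))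
      \<partial>lborel \<partial>lborel \<partial>lborel)"
  proof (rule nn_integral_cong, rule nn_integral_cong)
    fix x t :: real
    show "(\<integral>\<^sup>+y. ennreal (F x y t) \<partial>lborel)
      = (\<integral>\<^sup>+l. ennreal (eigenvalue_s1_density C a (l, t, x) * indicator A (l, t)) \<partial>lborel)"
    proof (cases "x > 0 \<and> t > x")
      case True
      then show ?thesis
        using nn_integral_eig_lo_substitution[OF a _ _ A, of x t c] by (simp add: F_def f_def C_def)
    next
      case False
      then have "F x y t = 0" "eigenvalue_s1_density C a (l, t, x) = 0" for y l
        by (auto simp: F_def f_def gamma_density_def eigenvalue_s1_density_def)
      then show ?thesis by simp
    qed
  qed
  finally show ?thesis unfolding f_def by (simp add: mult.assoc)
qed

lemma nn_integral_eigenvalue_pair: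
  fixes A :: "(real \<times> real) set"
  assumes a: "a > -1" and c: "c > 0" and A[measurable]: "A \<in> sets (borel \<Otimes>\<^sub>M borel)"
  defines "C \<equiv> c / (Gamma (a + 1) * 2 powr (a + 1) * (Gamma (a + 5) * 2 powr (a + 5)) * 140)"
  shows "(\<integral>\<^sup>+x. \<integral>\<^sup>+y. \<integral>\<^sup>+r. ennreal (gamma_density (a + 1) 2 x * gamma_density (a + 5) 2 y
            * gamma_kernel c 4 r * indicator A (eigenvalue_pair (x, y, r))) \<partial>lborel \<partial>lborel \<partial>lborel)
     = (\<integral>\<^sup>+l. \<integral>\<^sup>+t. ennreal (eigenvalue_density C a (l, t) * indicator A (l, t)) \<partial>lborel \<partial>lborel)"
proof -
  define C' where "C' = 140 * C"
  have "C' \<ge> 0" using a c unfolding C'_def C_def by (simp add: Gamma_real_pos less_imp_le)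
  define F where "F l t x = ennreal (eigenvalue_s1_density C' a (l, t, x) * indicator A (l, t))" for l t x
  have "(\<integral>\<^sup>+x. \<integral>\<^sup>+y. \<integral>\<^sup>+r. ennreal (gamma_density (a + 1) 2 x * gamma_density (a + 5) 2 y
            * gamma_kernel c 4 r * indicator A (eigenvalue_pair (x, y, r))) \<partial>lborel \<partial>lborel \<partial>lborel)
     = (\<integral>\<^sup>+x. \<integral>\<^sup>+t. \<integral>\<^sup>+l. F l t x \<partial>lborel \<partial>lborel \<partial>lborel)"
    unfolding F_def C'_def C_def using nn_integral_eigenvalue_pair_coordinates[OF a c A] by simp
  also have "\<dots> = (\<integral>\<^sup>+x. \<integral>\<^sup>+l. \<integral>\<^sup>+t. F l t x \<partial>lborel \<partial>lborel \<partial>lborel)"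
    by (rule nn_integral_cong, rule lborel_pair.Fubini') (unfold F_def, measurable)
  also have "\<dots> = (\<integral>\<^sup>+l. \<integral>\<^sup>+x. \<integral>\<^sup>+t. F l t x \<partial>lborel \<partial>lborel \<partial>lborel)"
    by (rule lborel_pair.Fubini') (unfold F_def, measurable)
  also have "\<dots> = (\<integral>\<^sup>+l. \<integral>\<^sup>+t. \<integral>\<^sup>+x. F l t x \<partial>lborel \<partial>lborel \<partial>lborel)"
    by (rule nn_integral_cong, rule lborel_pair.Fubini') (unfold F_def, measurable)
  also have "\<dots> = (\<integral>\<^sup>+l. \<integral>\<^sup>+t. ennreal (eigenvalue_density C a (l, t) * indicator A (l, t)) \<partial>lborel \<partial>lborel)"
  proof (rule nn_integral_cong, rule nn_integral_cong)
    fix l t :: real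
    have "(\<integral>\<^sup>+x. F l t x \<partial>lborel)
        = (\<integral>\<^sup>+x. ennreal (eigenvalue_s1_density C' a (l, t, x)) \<partial>lborel) * ennreal (indicator A (l, t))"
      unfolding F_def by (simp add: ennreal_mult'' nn_integral_multc)
    also have "\<dots> = ennreal (eigenvalue_density C a (l, t) * indicator A (l, t))"
      using \<open>C' \<ge> 0\<close> by (simp add: nn_integral_eigenvalue_s1_density ennreal_mult'' C'_def)
    finally show "(\<integral>\<^sup>+x. F l t x \<partial>lborel) = ennreal (eigenvalue_density C a (l, t) * indicator A (l, t))" .
  qed
  finally show ?thesis .
qed

lemma distributed_eigenvalue_pair:
  assumes a: "a > -1" and c: "c > 0"
    and Z: "distributed M (lborel \<Otimes>\<^sub>M (lborel \<Otimes>\<^sub>M lborel)) Z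
      (\<lambda>(x, y, r). ennreal (gamma_density (a + 1) 2 x * gamma_density (a + 5) 2 y * gamma_kernel c 4 r))"
  defines "C \<equiv> c / (Gamma (a + 1) * 2 powr (a + 1) * (Gamma (a + 5) * 2 powr (a + 5)) * 140)"
  shows "distributed M (lborel \<Otimes>\<^sub>M lborel) (\<lambda>\<omega>. eigenvalue_pair (Z \<omega>)) (\<lambda>p. ennreal (eigenvalue_density C a p))"
proof (rule distributed_image_by_nn_integral[OF Z])
  show "eigenvalue_pair \<in> measurable (lborel \<Otimes>\<^sub>M (lborel \<Otimes>\<^sub>M lborel)) (lborel \<Otimes>\<^sub>M lborel)"
    by (simp add: measurable_eigenvalue_pair cong: measurable_cong_sets)
  show "(\<lambda>p. ennreal (eigenvalue_density C a p)) \<in> borel_measurable (lborel \<Otimes>\<^sub>M lborel)"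
    unfolding eigenvalue_density_def by measurable
  fix A :: "(real \<times> real) set" assume "A \<in> sets (lborel \<Otimes>\<^sub>M lborel)"
  then have A[measurable]: "A \<in> sets (borel \<Otimes>\<^sub>M borel)" by (simp cong: sets_pair_measure_cong)
  define f where "f = (\<lambda>(x, y, r). ennreal (gamma_density (a + 1) 2 x * gamma_density (a + 5) 2 y
    * gamma_kernel c 4 r) * indicator A (eigenvalue_pair (x, y, r)))"
  have [measurable]: "f \<in> borel_measurable (lborel \<Otimes>\<^sub>M (lborel \<Otimes>\<^sub>M lborel))"
    unfolding f_def by measurable
  have "(\<integral>\<^sup>+z. (case z of (x, y, r) \<Rightarrow> ennreal (gamma_density (a + 1) 2 x * gamma_density (a + 5) 2 y
        * gamma_kernel c 4 r)) * indicator A (eigenvalue_pair z) \<partial>(lborel \<Otimes>\<^sub>M (lborel \<Otimes>\<^sub>M lborel)))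
      = (\<integral>\<^sup>+x. \<integral>\<^sup>+yr. f (x, yr) \<partial>(lborel \<Otimes>\<^sub>M lborel) \<partial>lborel)"
    unfolding f_def by (subst sigma_finite_measure.nn_integral_fst[symmetric])
      (auto intro!: sigma_finite_pair_measure lborel.sigma_finite_measure_axioms nn_integral_cong
        split: prod.split)
  also have "\<dots> = (\<integral>\<^sup>+x. \<integral>\<^sup>+y. \<integral>\<^sup>+r. f (x, y, r) \<partial>lborel \<partial>lborel \<partial>lborel)"
    by (rule nn_integral_cong, rule lborel.nn_integral_fst[symmetric]) measurable
  also have "\<dots> = (\<integral>\<^sup>+x. \<integral>\<^sup>+y. \<integral>\<^sup>+r. ennreal (gamma_density (a + 1) 2 x * gamma_density (a + 5) 2 y
            * gamma_kernel c 4 r * indicator A (eigenvalue_pair (x, y, r))) \<partial>lborel \<partial>lborel \<partial>lborel)"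
    unfolding f_def by (auto intro!: nn_integral_cong simp: ennreal_mult'' split: split_indicator)
  also have "\<dots> = (\<integral>\<^sup>+l. \<integral>\<^sup>+t. ennreal (eigenvalue_density C a (l, t) * indicator A (l, t)) \<partial>lborel \<partial>lborel)"
    unfolding C_def by (rule nn_integral_eigenvalue_pair[OF a c A])
  also have "\<dots> = (\<integral>\<^sup>+p. ennreal (eigenvalue_density C a p) * indicator A p \<partial>(lborel \<Otimes>\<^sub>M lborel))"
    by (subst lborel.nn_integral_fst[symmetric], measurable)
      (auto intro!: nn_integral_cong simp: ennreal_mult'' split: split_indicator)
  finally show "(\<integral>\<^sup>+z. (case z of (x, y, r) \<Rightarrow> ennreal (gamma_density (a + 1) 2 x * gamma_density (a + 5) 2 y
        * gamma_kernel c 4 r)) * indicator A (eigenvalue_pair z) \<partial>(lborel \<Otimes>\<^sub>M (lborel \<Otimes>\<^sub>M lborel)))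
      = (\<integral>\<^sup>+p. ennreal (eigenvalue_density C a p) * indicator A p \<partial>(lborel \<Otimes>\<^sub>M lborel))" .
qed

lemma oct_normsq_scale: "oct_normsq (oct_scale c x) = c\<^sup>2 * oct_normsq x"
  unfolding oct_normsq_def oct_scale_def by (simp add: sum_distrib_left power_mult_distrib)

theorem proposition5:
  fixes M :: "'w measure" and a :: real
    and t12 :: "'w \<Rightarrow> octo" and s1 s2 :: "'w \<Rightarrow> real"
  assumes "prob_space M"
    and "a > -1"
    and indep: "prob_space.indep_vars M (\<lambda>_. borel)
                  (\<lambda>i. if i < 8 then (\<lambda>\<omega>. t12 \<omega> i) else if i = 8 then s1 else s2)
                  {..<(10::nat)}"
    and gauss: "\<And>i. i < 8 \<Longrightarrow> distributed M lborel (\<lambda>\<omega>. t12 \<omega> i) std_normal_density"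
    and "distributed M lborel s1 (gamma_density (a + 1) 2)"
    and "distributed M lborel s2 (gamma_density (a + 5) 2)"
  defines "W11 \<equiv> \<lambda>\<omega>. (sqrt (s1 \<omega>))\<^sup>2"
    and "W12 \<equiv> \<lambda>\<omega>. oct_scale (sqrt (s1 \<omega>)) (t12 \<omega>)"
    and "W22 \<equiv> \<lambda>\<omega>. oct_normsq (t12 \<omega>) + (sqrt (s2 \<omega>))\<^sup>2"
  defines "lam1 \<equiv> \<lambda>\<omega>. eig_lo (W11 \<omega>) (W22 \<omega>) (oct_normsq (W12 \<omega>))"
    and "lam2 \<equiv> \<lambda>\<omega>. eig_hi (W11 \<omega>) (W22 \<omega>) (oct_normsq (W12 \<omega>))"
  shows "\<exists>c>0. distributed M (lborel \<Otimes>\<^sub>M lborel) (\<lambda>\<omega>. (lam1 \<omega>, lam2 \<omega>))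
           (\<lambda>(x, y). ennreal (if 0 < x \<and> x < y
              then c * (x * y) powr a * exp (- (x + y) / 2) * (y - x) ^ 8 else 0))"
proof -
  interpret prob_space M by fact
  define X where "X = (\<lambda>i::nat. if i < 8 then (\<lambda>\<omega>. t12 \<omega> i) else if i = 8 then s1 else s2)"
  obtain c where c: "c > 0" and joint: "distributed M (lborel \<Otimes>\<^sub>M (lborel \<Otimes>\<^sub>M lborel))
      (\<lambda>\<omega>. (s1 \<omega>, s2 \<omega>, \<Sum>i<8. (t12 \<omega> i)\<^sup>2))
      (\<lambda>(x, y, r). ennreal (gamma_density (a + 1) 2 x * gamma_density (a + 5) 2 y * gamma_kernel c 4 r))"
    using distributed_gamma_gamma_chi_square[of a X] assms(2-6) unfolding X_def by auto
  define C where "C = c / (Gamma (a + 1) * 2 powr (a + 1) * (Gamma (a + 5) * 2 powr (a + 5)) * 140)"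
  have "C > 0" using \<open>a > -1\<close> c by (simp add: C_def Gamma_real_pos)
  have "(\<lambda>\<omega>. (lam1 \<omega>, lam2 \<omega>)) = (\<lambda>\<omega>. eigenvalue_pair (s1 \<omega>, s2 \<omega>, \<Sum>i<8. (t12 \<omega> i)\<^sup>2))"
    unfolding lam1_def lam2_def W11_def W12_def W22_def oct_normsq_scale
    by (simp add: fun_eq_iff eigenvalue_pair_def oct_normsq_def)
  with distributed_eigenvalue_pair[OF \<open>a > -1\<close> c joint] \<open>C > 0\<close> show ?thesis
    unfolding C_def[symmetric] eigenvalue_density_def by (auto simp: case_prod_beta')
qed

end
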